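(* Let $G=(V,E)$ be a connected graph with $n=|V|$ nodes and let $\mathbf{A}\in\mathbb{R}^{n\times n}$ be a graph shift operator for $G$. Let $\mathbf{W}\in\mathbb{R}^{c\times c}$, $\mathbf{B}\in\mathbb{R}^{c'\times c}$, inputs $\mathbf{U}_t\in\mathbb{R}^{n\times c'}$, and consider the recurrence $\mathbf{X}_{t+1}=\mathbf{A}\mathbf{X}_t\mathbf{W}+\mathbf{U}_{t+1}\mathbf{B}$, $\mathbf{X}_t\in\mathbb{R}^{n\times c}$. Define the global sensitivity $\mathcal{S}(t-s)=\max_{i,j}\left\|\frac{\partial \mathbf{X}_t^{(i)}}{\partial \mathbf{X}_s^{(j)}}\right\|$. Then for all $s\le t$, $$\frac{\rho(\mathbf{A})^{t-s}}{|V|}\,\|\mathbf{W}^{t-s}\|\le\mathcal{S}(t-s),$$ where $\rho(\mathbf{A})$ is the spectral radius of $\mathbf{A}$. In particular, if $G$ is undirected and $\mathbf{A}=\mathbf{D}^{-1/2}(\tilde{\mathbf{A}}+\mathbf{I})\mathbf{D}^{-1/2}$, with $\tilde{\mathbf{A}}$ the adjacency matrix and $\mathbf{D}$ the diagonal degree matrix of $\tilde{\mathbf{A}}+\mathbf{I}$, then $\frac{1}{|V|}\|\mathbf{W}^{t-s}\|\le\mathcal{S}(t-s)$.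
   Context: $\mathbf{X}_t^{(i)}\in\mathbb{R}^{1\times c}$ denotes the $i$-th row of $\mathbf{X}_t$, regarded as a function of $\mathbf{X}_s$ through the recurrence with inputs held fixed; the Jacobian of row vectors is the $c\times c$ matrix with $(p,q)$ entry $\partial y_p/\partial x_q$. $\|\cdot\|$ denotes the spectral norm and the maximum is over all pairs of nodes $i,j$. *)

theory Defs
  imports "HOL-Analysis.Analysis"
begin

primrec mat_pow :: "real^'n^'n \<Rightarrow> nat \<Rightarrow> real^'n^'n" where
  "mat_pow M 0 = mat 1"
| "mat_pow M (Suc k) = M ** mat_pow M k"

definition spec_norm :: "real^'m^'k \<Rightarrow> real" where
  "spec_norm M = onorm (\<lambda>x. M *v x)"

definition spectral_radius :: "real^'n^'n \<Rightarrow> real" where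
  "spectral_radius A = Max {cmod z | z. \<exists>v :: complex^'n. v \<noteq> 0 \<and>
      (\<chi> i j. complex_of_real (A $ i $ j)) *v v = z *s v}"

text \<open>Graphs on the finite node type 'n, given by an edge relation E (E i j: edge from i to j).\<close>
definition graph_connected :: "('n \<Rightarrow> 'n \<Rightarrow> bool) \<Rightarrow> bool" where
  "graph_connected E \<longleftrightarrow> (\<forall>u v. (\<lambda>x y. E x y \<or> E y x)\<^sup>*\<^sup>* u v)"

definition graph_shift_operator :: "('n \<Rightarrow> 'n \<Rightarrow> bool) \<Rightarrow> real^'n^'n \<Rightarrow> bool" where
  "graph_shift_operator E A \<longleftrightarrow> (\<forall>i j. i \<noteq> j \<and> \<not> E i j \<and> \<not> E j i \<longrightarrow> A $ i $ j = 0)"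

definition undirected_graph :: "('n \<Rightarrow> 'n \<Rightarrow> bool) \<Rightarrow> bool" where
  "undirected_graph E \<longleftrightarrow> (\<forall>i j. E i j \<longleftrightarrow> E j i) \<and> (\<forall>i. \<not> E i i)"

definition adjacency :: "('n \<Rightarrow> 'n \<Rightarrow> bool) \<Rightarrow> real^'n^'n" where
  "adjacency E = (\<chi> i j. if E i j then 1 else 0)"

definition degree_matrix :: "real^'n^'n \<Rightarrow> real^'n^'n" where
  "degree_matrix M = (\<chi> i j. if i = j then (\<Sum>k\<in>UNIV. M $ i $ k) else 0)"

definition diag_inv_sqrt :: "real^'n^'n \<Rightarrow> real^'n^'n" where
  "diag_inv_sqrt D = (\<chi> i j. if i = j then 1 / sqrt (D $ i $ i) else 0)"

definition sym_norm_adj :: "('n \<Rightarrow> 'n \<Rightarrow> bool) \<Rightarrow> real^'n^'n" where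
  "sym_norm_adj E = (let M = adjacency E + mat 1; Dm = diag_inv_sqrt (degree_matrix M)
                      in Dm ** M ** Dm)"

text \<open>The recurrence X_{t+1} = A X_t W + U_{t+1} B started at time s from X_s = X0;
  rec_state A W B U s X0 k is X_{s+k}.\<close>
primrec rec_state :: "real^'n^'n \<Rightarrow> real^'c^'c \<Rightarrow> real^'c^'d \<Rightarrow> (nat \<Rightarrow> real^'d^'n)
     \<Rightarrow> nat \<Rightarrow> real^'c^'n \<Rightarrow> nat \<Rightarrow> real^'c^'n" where
  "rec_state A W B U s X0 0 = X0"
| "rec_state A W B U s X0 (Suc k) = A ** rec_state A W B U s X0 k ** W + U (s + Suc k) ** B"

text \<open>Jacobian (c x c, entry (p,q) = d y_p / d x_q) of row i of X_t with respect to row j of X_s,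
  evaluated at X_s = X0, inputs fixed.\<close>
definition row_jacobian :: "real^'n^'n \<Rightarrow> real^'c^'c \<Rightarrow> real^'c^'d \<Rightarrow> (nat \<Rightarrow> real^'d^'n)
     \<Rightarrow> nat \<Rightarrow> nat \<Rightarrow> real^'c^'n \<Rightarrow> 'n \<Rightarrow> 'n \<Rightarrow> real^'c^'c" where
  "row_jacobian A W B U s t X0 i j = (THE J.
     ((\<lambda>y. rec_state A W B U s (\<chi> k. if k = j then y else X0 $ k) (t - s) $ i)
        has_derivative (\<lambda>h. J *v h)) (at (X0 $ j)))"

definition sensitivity :: "real^'n^'n \<Rightarrow> real^'c^'c \<Rightarrow> real^'c^'d \<Rightarrow> (nat \<Rightarrow> real^'d^'n)
     \<Rightarrow> nat \<Rightarrow> nat \<Rightarrow> real^'c^'n \<Rightarrow> real" where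
  "sensitivity A W B U s t X0 = Max {spec_norm (row_jacobian A W B U s t X0 i j) | i j. True}"

end

(* Only the linear part of the recurrence matters: X_{s+k} - Y_{s+k} = A^k (X_s - Y_s) W^k, so the
   Jacobian of row i of X_t with respect to row j of X_s is (A^k)_ij (W^k)^T with k = t - s, whose
   spectral norm is |(A^k)_ij| ||W^k||.  If A v = z v and i is a coordinate where |v_i| is largest,
   then |z|^k |v_i| = |(A^k v)_i| <= n max_j |(A^k)_ij| |v_i|, so some entry of A^k is at least
   rho(A)^k / n.  For the symmetrically normalised adjacency matrix the entrywise square root of
   the degree vector is a fixed vector, hence rho(A) >= 1. *)
theory Submission
  imports Defs "Jordan_Normal_Form.Char_Poly"
begin

no_notation Matrix.vec_index (infixl "$" 100)

(* Eigenvalues of Cartesian matrices are transported along an enumeration f of the index type to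
   Jordan_Normal_Form matrices, where they are the roots of the characteristic polynomial. *)
definition vec_of_cart :: "(nat \<Rightarrow> 'n::finite) \<Rightarrow> 'a^'n \<Rightarrow> 'a Matrix.vec" where
  "vec_of_cart f v = Matrix.vec CARD('n) (\<lambda>i. v $ f i)"

definition mat_of_cart :: "(nat \<Rightarrow> 'n::finite) \<Rightarrow> 'a^'n^'n \<Rightarrow> 'a Matrix.mat" where
  "mat_of_cart f M = Matrix.mat CARD('n) CARD('n) (\<lambda>(i, j). M $ f i $ f j)"

definition cart_eigenvalues :: "'a::field^'n^'n \<Rightarrow> 'a set" where
  "cart_eigenvalues M = {z. \<exists>v. v \<noteq> 0 \<and> M *v v = z *s v}"

lemma bij_betw_vec_of_cart:
  assumes f: "bij_betw f {0..<CARD('n)} (UNIV :: 'n::finite set)"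
  shows "bij_betw (vec_of_cart f :: 'a^'n \<Rightarrow> _) UNIV (carrier_vec CARD('n))"
proof (rule bij_betwI')
  fix v w :: "'a^'n"
  have "vec_of_cart f v = vec_of_cart f w \<longleftrightarrow> (\<forall>i<CARD('n). v $ f i = w $ f i)"
    by (auto simp: vec_of_cart_def Matrix.vec_eq_iff)
  also have "\<dots> \<longleftrightarrow> v = w"
    using bij_betw_imp_surj_on[OF f] unfolding Finite_Cartesian_Product.vec_eq_iff
    by (metis atLeastLessThan_iff imageE rangeI)
  finally show "vec_of_cart f v = vec_of_cart f w \<longleftrightarrow> v = w" .
next
  show "vec_of_cart f v \<in> carrier_vec CARD('n)" for v :: "'a^'n"
    by (simp add: vec_of_cart_def)
next
  fix w :: "'a Matrix.vec" assume w: "w \<in> carrier_vec CARD('n)"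
  define v :: "'a^'n" where "v = (\<chi> x. vec_index w (inv_into {0..<CARD('n)} f x))"
  have "vec_of_cart f v = w"
    using w f unfolding vec_of_cart_def v_def
    by (intro eq_vecI) (auto simp: bij_betw_inv_into_left)
  then show "\<exists>v\<in>UNIV. w = vec_of_cart f v" by auto
qed

lemma mat_of_cart_mult_vec:
  assumes f: "bij_betw f {0..<CARD('n)} (UNIV :: 'n::finite set)"
  shows "mat_of_cart f M *\<^sub>v vec_of_cart f v = vec_of_cart f (M *v v :: 'a::semiring_1^'n)"
proof (rule eq_vecI)
  fix i assume "i < dim_vec (vec_of_cart f (M *v v))"
  then have "i < CARD('n)" by (simp add: vec_of_cart_def)
  then show "vec_index (mat_of_cart f M *\<^sub>v vec_of_cart f v) i
      = vec_index (vec_of_cart f (M *v v)) i"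
    using sum.reindex_bij_betw[OF f, of "\<lambda>x. M $ f i $ x * v $ x"]
    by (simp add: mat_of_cart_def vec_of_cart_def mult_mat_vec_def scalar_prod_def
        matrix_vector_mult_def)
qed (simp add: mat_of_cart_def vec_of_cart_def)

lemma vec_of_cart_smult:
  "vec_of_cart f (c *s v) = c \<cdot>\<^sub>v vec_of_cart f (v :: 'a::semiring_1^'n::finite)"
  by (rule eq_vecI) (auto simp: vec_of_cart_def)

lemma vec_of_cart_zero: "vec_of_cart f (0 :: 'a::zero^'n::finite) = 0\<^sub>v CARD('n)"
  by (rule eq_vecI) (auto simp: vec_of_cart_def)

lemma cart_eigenvalues_eq_eigenvalue:
  fixes M :: "'a::field^'n::finite^'n"
  assumes f: "bij_betw f {0..<CARD('n)} (UNIV :: 'n set)"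
  shows "cart_eigenvalues M = Collect (eigenvalue (mat_of_cart f M))"
proof -
  note bij = bij_betw_vec_of_cart[OF f, where 'a = 'a]
  have inj: "vec_of_cart f v = vec_of_cart f w \<longleftrightarrow> v = w" for v w :: "'a^'n"
    using bij by (auto dest: bij_betw_imp_inj_on simp: inj_on_eq_iff)
  have "z \<in> cart_eigenvalues M \<longleftrightarrow> eigenvalue (mat_of_cart f M) z" for z
  proof -
    have "z \<in> cart_eigenvalues M \<longleftrightarrow>
        (\<exists>v. vec_of_cart f v \<noteq> 0\<^sub>v CARD('n) \<and>
             mat_of_cart f M *\<^sub>v vec_of_cart f v = z \<cdot>\<^sub>v vec_of_cart f v)"
      unfolding cart_eigenvalues_def mat_of_cart_mult_vec[OF f] vec_of_cart_smult[symmetric]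
        vec_of_cart_zero[of f, symmetric] inj by simp
    also have "\<dots> \<longleftrightarrow> (\<exists>w \<in> carrier_vec CARD('n). w \<noteq> 0\<^sub>v CARD('n) \<and>
        mat_of_cart f M *\<^sub>v w = z \<cdot>\<^sub>v w)"
      unfolding bij_betw_imp_surj_on[OF bij, symmetric] by blast
    also have "\<dots> \<longleftrightarrow> eigenvalue (mat_of_cart f M) z"
      by (simp add: eigenvalue_def eigenvector_def mat_of_cart_def Bex_def)
    finally show ?thesis .
  qed
  then show ?thesis by auto
qed

lemma cart_eigenvalues_finite_nonempty:
  fixes M :: "complex^'n::finite^'n"
  shows "finite (cart_eigenvalues M)" and "cart_eigenvalues M \<noteq> {}"
proof -
  obtain f where f: "bij_betw f {0..<CARD('n)} (UNIV :: 'n set)"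
    using ex_bij_betw_nat_finite[of "UNIV :: 'n set"] by auto
  have M: "mat_of_cart f M \<in> carrier_mat CARD('n) CARD('n)"
    by (simp add: mat_of_cart_def)
  let ?p = "char_poly (mat_of_cart f M)"
  have roots: "cart_eigenvalues M = {z. poly ?p z = 0}"
    using cart_eigenvalues_eq_eigenvalue[OF f] eigenvalue_root_char_poly[OF M] by auto
  have "degree ?p = CARD('n)" "coeff ?p CARD('n) = 1"
    using degree_monic_char_poly[OF M] by auto
  then have "?p \<noteq> 0" and "\<not> constant (poly ?p)"
    by (auto simp: constant_degree)
  show "finite (cart_eigenvalues M)"
    unfolding roots by (rule poly_roots_finite) fact
  show "cart_eigenvalues M \<noteq> {}"
    unfolding roots using fundamental_theorem_of_algebra[OF \<open>\<not> constant (poly ?p)\<close>] by auto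
qed

lemma spectral_radius_eq_Max:
  "spectral_radius A = Max (cmod ` cart_eigenvalues (map_matrix complex_of_real A))"
  unfolding spectral_radius_def cart_eigenvalues_def map_matrix_def
  by (simp only: image_Collect)

lemma spectral_radius_attained:
  fixes A :: "real^'n::finite^'n"
  obtains z v where "v \<noteq> 0" "map_matrix complex_of_real A *v v = z *s v"
    "spectral_radius A = cmod z"
proof -
  have "spectral_radius A \<in> cmod ` cart_eigenvalues (map_matrix complex_of_real A)"
    unfolding spectral_radius_eq_Max using cart_eigenvalues_finite_nonempty by (intro Max_in) auto
  then show ?thesis using that unfolding cart_eigenvalues_def by auto
qed

lemma cmod_eigenvalue_le_spectral_radius:
  fixes A :: "real^'n::finite^'n"
  assumes "v \<noteq> 0" "map_matrix complex_of_real A *v v = z *s v"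
  shows "cmod z \<le> spectral_radius A"
  unfolding spectral_radius_eq_Max using assms cart_eigenvalues_finite_nonempty
  by (intro Max_ge) (auto simp: cart_eigenvalues_def)

lemma map_matrix_of_real_mult:
  "map_matrix of_real (P ** Q)
     = map_matrix of_real P ** (map_matrix of_real Q :: 'a::real_algebra_1^_^_)"
  by (simp add: map_matrix_def matrix_matrix_mult_def Finite_Cartesian_Product.vec_eq_iff)

lemma map_matrix_of_real_mat_pow_eigenvector:
  fixes A :: "real^'n::finite^'n"
  assumes "map_matrix complex_of_real A *v v = z *s v"
  shows "map_matrix complex_of_real (mat_pow A k) *v v = z ^ k *s v"
proof (induction k)
  case 0
  have "map_matrix complex_of_real (Finite_Cartesian_Product.mat 1)
      = (Finite_Cartesian_Product.mat 1 :: complex^'n^'n)"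
    by (simp add: Finite_Cartesian_Product.mat_def Finite_Cartesian_Product.vec_eq_iff)
  then show ?case by simp
next
  case (Suc k)
  have "map_matrix complex_of_real (mat_pow A (Suc k)) *v v
      = map_matrix complex_of_real A *v (z ^ k *s v)"
    by (simp add: map_matrix_of_real_mult matrix_vector_mul_assoc[symmetric] Suc)
  also have "\<dots> = z ^ Suc k *s v"
    using assms by (simp add: vector_scalar_commute)
  finally show ?case .
qed

lemma finite_type_has_argmax:
  fixes f :: "'n::finite \<Rightarrow> 'a::linorder"
  obtains i where "\<And>l. f l \<le> f i"
proof -
  have "Max (range f) \<in> range f" by (rule Max_in) simp_all
  then obtain i where "f i = Max (range f)" by (metis rangeE)
  then have "f l \<le> f i" for l by simp
  with that show ?thesis by blast
qed

lemma cmod_eigenvalue_le_card_mult_entry: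
  fixes P :: "real^'n::finite^'n"
  assumes v: "v \<noteq> 0" and eig: "map_matrix complex_of_real P *v v = w *s v"
  obtains i j where "cmod w \<le> real CARD('n) * \<bar>P $ i $ j\<bar>"
proof -
  obtain i where i: "\<And>l. cmod (v $ l) \<le> cmod (v $ i)"
    using finite_type_has_argmax[of "\<lambda>l. cmod (v $ l)"] by blast
  obtain j where j: "\<And>l. \<bar>P $ i $ l\<bar> \<le> \<bar>P $ i $ j\<bar>"
    using finite_type_has_argmax[of "\<lambda>l. \<bar>P $ i $ l\<bar>"] by blast
  obtain l where "v $ l \<noteq> 0"
    using v by (metis Finite_Cartesian_Product.vec_eq_iff zero_index)
  then have "cmod (v $ i) > 0"
    using i[of l] by (metis less_le_trans zero_less_norm_iff)
  moreover have "cmod w * cmod (v $ i) \<le> (real CARD('n) * \<bar>P $ i $ j\<bar>) * cmod (v $ i)"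
  proof -
    have "cmod w * cmod (v $ i) = cmod (\<Sum>l\<in>UNIV. complex_of_real (P $ i $ l) * v $ l)"
      using arg_cong[OF eig, of "\<lambda>x. cmod (x $ i)"]
      by (simp add: matrix_vector_mult_def norm_mult)
    also have "\<dots> \<le> (\<Sum>l\<in>UNIV. \<bar>P $ i $ l\<bar> * cmod (v $ l))"
      by (rule order_trans[OF norm_sum]) (simp add: norm_mult)
    also have "\<dots> \<le> (\<Sum>l\<in>(UNIV::'n set). \<bar>P $ i $ j\<bar> * cmod (v $ i))"
      by (intro sum_mono mult_mono i j) auto
    finally show ?thesis by simp
  qed
  ultimately show ?thesis using that by (meson mult_le_cancel_right_pos)
qed

lemma spectral_radius_pow_le_card_mult_entry:
  fixes A :: "real^'n::finite^'n"
  obtains i j where "spectral_radius A ^ k \<le> real CARD('n) * \<bar>mat_pow A k $ i $ j\<bar>"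
proof -
  obtain z v where "v \<noteq> 0" "map_matrix complex_of_real A *v v = z *s v"
    and \<rho>: "spectral_radius A = cmod z"
    by (rule spectral_radius_attained)
  then have "map_matrix complex_of_real (mat_pow A k) *v v = z ^ k *s v"
    by (simp add: map_matrix_of_real_mat_pow_eigenvector)
  with \<open>v \<noteq> 0\<close> obtain i j where "cmod (z ^ k) \<le> real CARD('n) * \<bar>mat_pow A k $ i $ j\<bar>"
    by (rule cmod_eigenvalue_le_card_mult_entry)
  then show ?thesis using that by (simp add: \<rho> norm_power)
qed

lemma mat_pow_Suc_right: "mat_pow M (Suc k) = mat_pow M k ** M"
  by (induction k) (simp_all add: matrix_mul_assoc)

lemma matrix_mul_diff_left: "(A::'a::ring_1^'n^'m) ** (B - C) = A ** B - A ** C"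
  by (simp add: matrix_matrix_mult_def Finite_Cartesian_Product.vec_eq_iff sum_subtractf
      right_diff_distrib)

lemma matrix_mul_diff_right: "((B::'a::ring_1^'n^'m) - C) ** A = B ** A - C ** A"
  by (simp add: matrix_matrix_mult_def Finite_Cartesian_Product.vec_eq_iff sum_subtractf
      left_diff_distrib)

lemma rec_state_diff:
  "rec_state A W B U s X k - rec_state A W B U s Y k = mat_pow A k ** (X - Y) ** mat_pow W k"
proof (induction k)
  case (Suc k)
  have "rec_state A W B U s X (Suc k) - rec_state A W B U s Y (Suc k)
     = A ** (rec_state A W B U s X k - rec_state A W B U s Y k) ** W"
    by (simp add: matrix_mul_diff_left matrix_mul_diff_right)
  then show ?case
    by (simp only: Suc mat_pow.simps(2)[of A] mat_pow_Suc_right[of W] matrix_mul_assoc)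
qed simp

lemma matrix_mul_single_row:
  fixes P :: "real^'n::finite^'m::finite" and Q :: "real^'c::finite^'b::finite"
  shows "(P ** (\<chi> l. if l = j then d else 0) ** Q) $ i = (P $ i $ j) *\<^sub>R (d v* Q)"
  by (simp add: Finite_Cartesian_Product.vec_eq_iff matrix_matrix_mult_def
      vector_matrix_mult_def if_distrib if_distribR sum_distrib_left mult.assoc
      cong: if_cong)

lemma the_derivative_affine:
  fixes J :: "real^'m::finite^'k::finite"
  assumes "\<And>y. f y = J *v y + b"
  shows "(THE J'. (f has_derivative (\<lambda>h. J' *v h)) (at x)) = J"
proof (rule the_equality)
  have "f = (\<lambda>y. J *v y + b)" using assms by auto
  then show der: "(f has_derivative (\<lambda>h. J *v h)) (at x)"
    by (simp add: has_derivative_add_const bounded_linear_imp_has_derivative)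
  fix J' assume "(f has_derivative (\<lambda>h. J' *v h)) (at x)"
  then have "(\<lambda>h. J' *v h) = (\<lambda>h. J *v h)" using der by (rule has_derivative_unique)
  then show "J' = J" by (simp add: matrix_eq fun_eq_iff)
qed

lemma row_jacobian_eq:
  "row_jacobian A W B U s t X0 i j
     = (mat_pow A (t - s) $ i $ j) *\<^sub>R transpose (mat_pow W (t - s))"
proof -
  let ?k = "t - s"
  let ?J = "(mat_pow A ?k $ i $ j) *\<^sub>R transpose (mat_pow W ?k)"
  let ?X = "\<lambda>y. \<chi> l. if l = j then y else X0 $ l"
  have "rec_state A W B U s (?X y) ?k $ i
      = ?J *v y + (rec_state A W B U s X0 ?k $ i - ?J *v X0 $ j)" for y
  proof -
    have "?X y - X0 = (\<chi> l. if l = j then y - X0 $ j else 0)"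
      by (simp add: Finite_Cartesian_Product.vec_eq_iff)
    then have "rec_state A W B U s (?X y) ?k $ i - rec_state A W B U s X0 ?k $ i
        = (mat_pow A ?k ** (\<chi> l. if l = j then y - X0 $ j else 0) ** mat_pow W ?k) $ i"
      by (simp only: vector_minus_component[symmetric] rec_state_diff)
    also have "\<dots> = ?J *v (y - X0 $ j)"
      by (simp add: matrix_mul_single_row flip: scaleR_matrix_vector_assoc)
    finally show ?thesis by (simp add: algebra_simps)
  qed
  then show ?thesis
    unfolding row_jacobian_def by (rule the_derivative_affine)
qed

lemma spec_norm_nonneg: "0 \<le> spec_norm M"
  unfolding spec_norm_def by (rule onorm_pos_le) simp

lemma spec_norm_scaleR: "spec_norm (c *\<^sub>R M) = \<bar>c\<bar> * spec_norm M"
  unfolding spec_norm_def scaleR_matrix_vector_assoc[symmetric]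
  by (rule onorm_scaleR) simp

lemma spec_norm_le_transpose:
  fixes M :: "real^'m::finite^'k::finite"
  shows "spec_norm M \<le> spec_norm (transpose M)"
  unfolding spec_norm_def
proof (rule onorm_le)
  fix x :: "real^'m"
  let ?T = "onorm (\<lambda>x. transpose M *v x)"
  have "norm (M *v x) ^ 2 = inner (transpose M *v (M *v x)) x"
    by (simp add: power2_norm_eq_inner dot_lmul_matrix[symmetric])
  also have "\<dots> \<le> norm (transpose M *v (M *v x)) * norm x"
    by (rule norm_cauchy_schwarz)
  also have "\<dots> \<le> ?T * norm (M *v x) * norm x"
    by (rule mult_right_mono[OF onorm[OF matrix_vector_mul_bounded_linear]]) simp
  finally have "norm (M *v x) * norm (M *v x) \<le> (?T * norm x) * norm (M *v x)"
    by (simp add: power2_eq_square mult_ac)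
  moreover have "0 \<le> ?T * norm x"
    by (intro mult_nonneg_nonneg onorm_pos_le matrix_vector_mul_bounded_linear norm_ge_zero)
  ultimately show "norm (M *v x) \<le> ?T * norm x"
    by (cases "norm (M *v x) = 0") (auto intro: mult_right_le_imp_le)
qed

lemma spec_norm_transpose: "spec_norm (transpose M) = spec_norm M"
  using spec_norm_le_transpose[of M] spec_norm_le_transpose[of "transpose M"] by simp

lemma spec_norm_row_jacobian:
  "spec_norm (row_jacobian A W B U s t X0 i j)
     = \<bar>mat_pow A (t - s) $ i $ j\<bar> * spec_norm (mat_pow W (t - s))"
  by (simp add: row_jacobian_eq spec_norm_scaleR spec_norm_transpose)

lemma spec_norm_row_jacobian_le_sensitivity:
  "spec_norm (row_jacobian A W B U s t X0 i j) \<le> sensitivity A W B U s t X0"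
proof -
  have "{spec_norm (row_jacobian A W B U s t X0 i j) | i j. True}
      = (\<lambda>(i, j). spec_norm (row_jacobian A W B U s t X0 i j)) ` UNIV"
    by auto
  then show ?thesis
    unfolding sensitivity_def by (intro Max_ge) auto
qed

lemma spectral_radius_pow_sensitivity_bound:
  fixes A :: "real^'n::finite^'n"
  shows "spectral_radius A ^ (t - s) / real CARD('n) * spec_norm (mat_pow W (t - s))
           \<le> sensitivity A W B U s t X0"
proof -
  obtain i j where "spectral_radius A ^ (t - s) \<le> real CARD('n) * \<bar>mat_pow A (t - s) $ i $ j\<bar>"
    by (rule spectral_radius_pow_le_card_mult_entry)
  then have "spectral_radius A ^ (t - s) / real CARD('n) \<le> \<bar>mat_pow A (t - s) $ i $ j\<bar>"
    by (simp add: divide_le_eq mult.commute)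
  then have "spectral_radius A ^ (t - s) / real CARD('n) * spec_norm (mat_pow W (t - s))
      \<le> spec_norm (row_jacobian A W B U s t X0 i j)"
    unfolding spec_norm_row_jacobian by (rule mult_right_mono) (rule spec_norm_nonneg)
  also have "\<dots> \<le> sensitivity A W B U s t X0"
    by (rule spec_norm_row_jacobian_le_sensitivity)
  finally show ?thesis .
qed

lemma abs_real_eigenvalue_le_spectral_radius:
  fixes A :: "real^'n::finite^'n"
  assumes "v \<noteq> 0" "A *v v = c *s v"
  shows "\<bar>c\<bar> \<le> spectral_radius A"
proof -
  let ?v = "\<chi> i. complex_of_real (v $ i)"
  have "?v \<noteq> 0"
    using assms(1) by (simp add: Finite_Cartesian_Product.vec_eq_iff)
  moreover have "map_matrix complex_of_real A *v ?v = complex_of_real c *s ?v"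
    using assms(2) unfolding Finite_Cartesian_Product.vec_eq_iff
    by (simp add: matrix_vector_mult_def flip: of_real_mult of_real_sum)
  ultimately show ?thesis
    using cmod_eigenvalue_le_spectral_radius by fastforce
qed

lemma diag_inv_sqrt_mult_vec:
  "diag_inv_sqrt D *v x = (\<chi> i. x $ i / sqrt (D $ i $ i))"
  by (simp add: Finite_Cartesian_Product.vec_eq_iff diag_inv_sqrt_def matrix_vector_mult_def
      if_distrib if_distribR cong: if_cong)

lemma symmetric_normalization_fixes_sqrt_degrees:
  fixes M :: "real^'n::finite^'n"
  defines "D \<equiv> degree_matrix M"
  assumes pos: "\<And>i. 0 < D $ i $ i"
  shows "(diag_inv_sqrt D ** M ** diag_inv_sqrt D) *v (\<chi> i. sqrt (D $ i $ i))
           = (\<chi> i. sqrt (D $ i $ i))"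
proof -
  have "diag_inv_sqrt D *v (\<chi> i. sqrt (D $ i $ i)) = (\<chi> i. 1)"
    using pos by (simp add: diag_inv_sqrt_mult_vec Finite_Cartesian_Product.vec_eq_iff
        less_imp_neq[symmetric])
  moreover have "M *v (\<chi> i. 1) = (\<chi> i. D $ i $ i)"
    by (simp add: D_def degree_matrix_def matrix_vector_mult_def)
  moreover have "diag_inv_sqrt D *v (\<chi> i. D $ i $ i) = (\<chi> i. sqrt (D $ i $ i))"
    using pos by (simp add: diag_inv_sqrt_mult_vec Finite_Cartesian_Product.vec_eq_iff
        real_div_sqrt less_imp_le)
  ultimately show ?thesis
    by (simp add: matrix_vector_mul_assoc[symmetric])
qed

lemma one_le_spectral_radius_sym_norm_adj: "1 \<le> spectral_radius (sym_norm_adj E)"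
proof -
  let ?M = "adjacency E + Finite_Cartesian_Product.mat 1"
  let ?x = "\<chi> i. sqrt (degree_matrix ?M $ i $ i)"
  have one_le: "1 \<le> degree_matrix ?M $ i $ i" for i
  proof -
    have "1 \<le> ?M $ i $ i"
      by (simp add: adjacency_def Finite_Cartesian_Product.mat_def)
    also have "\<dots> \<le> (\<Sum>k\<in>UNIV. ?M $ i $ k)"
      by (rule member_le_sum) (simp_all add: adjacency_def Finite_Cartesian_Product.mat_def)
    also have "\<dots> = degree_matrix ?M $ i $ i"
      by (simp add: degree_matrix_def)
    finally show ?thesis .
  qed
  have pos: "0 < degree_matrix ?M $ i $ i" for i
    using one_le[of i] by linarith
  have "?x $ i \<noteq> 0" for i
    using pos[of i] by simp
  then have "?x \<noteq> 0"
    by (metis zero_index)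
  moreover have "sym_norm_adj E *v ?x = ?x"
    unfolding sym_norm_adj_def Let_def by (rule symmetric_normalization_fixes_sqrt_degrees) (rule pos)
  ultimately show ?thesis
    using abs_real_eigenvalue_le_spectral_radius[of ?x "sym_norm_adj E" 1] by simp
qed

lemma inverse_card_mult_spec_norm_le_sensitivity:
  fixes A :: "real^'n::finite^'n"
  assumes "1 \<le> spectral_radius A"
  shows "1 / real CARD('n) * spec_norm (mat_pow W (t - s)) \<le> sensitivity A W B U s t X0"
proof -
  have "1 \<le> spectral_radius A ^ (t - s)"
    using assms by (rule one_le_power)
  then have "1 / real CARD('n) * spec_norm (mat_pow W (t - s))
      \<le> spectral_radius A ^ (t - s) / real CARD('n) * spec_norm (mat_pow W (t - s))"
    by (intro mult_right_mono divide_right_mono spec_norm_nonneg) simp_all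
  also have "\<dots> \<le> sensitivity A W B U s t X0"
    by (rule spectral_radius_pow_sensitivity_bound)
  finally show ?thesis .
qed

theorem theorem3p11:
  fixes E :: "'n::finite \<Rightarrow> 'n \<Rightarrow> bool"
    and A :: "real^'n^'n"
  assumes "graph_connected E"
  shows "(graph_shift_operator E A \<longrightarrow>
           (\<forall>(W :: real^'c::finite^'c) (B :: real^'c^'d::finite) (U :: nat \<Rightarrow> real^'d^'n)
              (X0 :: real^'c^'n) s t. s \<le> t \<longrightarrow>
              spectral_radius A ^ (t - s) / real CARD('n) * spec_norm (mat_pow W (t - s))
                \<le> sensitivity A W B U s t X0))
       \<and> (undirected_graph E \<and> A = sym_norm_adj E \<longrightarrow>
           (\<forall>(W :: real^'c^'c) (B :: real^'c^'d) (U :: nat \<Rightarrow> real^'d^'n)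
              (X0 :: real^'c^'n) s t. s \<le> t \<longrightarrow>
              1 / real CARD('n) * spec_norm (mat_pow W (t - s))
                \<le> sensitivity A W B U s t X0))"
  using spectral_radius_pow_sensitivity_bound
    inverse_card_mult_spec_norm_le_sensitivity[OF one_le_spectral_radius_sym_norm_adj]
  by auto

end
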